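(* Let $G=(V,E)$ be a complete bipartite graph with $V=V_1\cup V_2$, $V_1\cap V_2=\emptyset$, $V_1,V_2\neq\emptyset$, and $E=\{\{i,j\}: i\in V_1,\ j\in V_2\}$. Let $c\in\mathbb{R}^{|V|}$ have strictly positive components and $\rho>0$. Then there exist strictly positive edge weights such that the weighted adjacency matrix $A$ satisfies $Ac=\rho c$ if and only if $\sum_{j\in V_1}c_j^2=\sum_{j\in V_2}c_j^2$.
   Context: For positive edge weights $w_{ij}=w_{ji}$ ($\{i,j\}\in E$), the weighted adjacency matrix $A$ has $a_{ij}=w_{ij}$ if $\{i,j\}\in E$ and $a_{ij}=0$ otherwise. *)

theory Defs
  imports Main "HOL-Analysis.Analysis"
begin

definition cbip_edges :: "'a set \<Rightarrow> 'a set \<Rightarrow> 'a set set" where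
  "cbip_edges V1 V2 = {{i, j} | i j. i \<in> V1 \<and> j \<in> V2}"

definition pos_edge_weights :: "'a set set \<Rightarrow> ('a \<Rightarrow> 'a \<Rightarrow> real) \<Rightarrow> bool" where
  "pos_edge_weights E w \<longleftrightarrow> (\<forall>i j. {i, j} \<in> E \<longrightarrow> w i j = w j i \<and> w i j > 0)"

definition wadj :: "'a set set \<Rightarrow> ('a \<Rightarrow> 'a \<Rightarrow> real) \<Rightarrow> 'a \<Rightarrow> 'a \<Rightarrow> real" where
  "wadj E w i j = (if {i, j} \<in> E then w i j else 0)"

definition mat_vec :: "'a set \<Rightarrow> ('a \<Rightarrow> 'a \<Rightarrow> real) \<Rightarrow> ('a \<Rightarrow> real) \<Rightarrow> 'a \<Rightarrow> real" where
  "mat_vec V A c i = (\<Sum>j\<in>V. A i j * c j)"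

end

theory Submission
  imports Defs
begin

text \<open>Multiplying the eigen-equation at each vertex i by c i and summing over one side of the
  bipartition yields, for either side, the same quadratic form (sum of c i * w i j * c j over the
  edges), so rho times the two sums of squares agree. Conversely, if both sums of squares equal S,
  the rank-one weights w i j = rho * c i * c j / S make c an eigenvector for rho.\<close>

lemma cbip_edge_iff:
  "{i, j} \<in> cbip_edges V1 V2 \<longleftrightarrow> (i \<in> V1 \<and> j \<in> V2) \<or> (i \<in> V2 \<and> j \<in> V1)"
  unfolding cbip_edges_def by (auto simp: doubleton_eq_iff)

lemma cbip_edges_commute: "cbip_edges V1 V2 = cbip_edges V2 V1"
  unfolding cbip_edges_def by (auto simp: insert_commute)

lemma mat_vec_cbip:
  assumes "finite V1" "finite V2" "V1 \<inter> V2 = {}" "i \<in> V1"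
  shows "mat_vec (V1 \<union> V2) (wadj (cbip_edges V1 V2) w) c i = (\<Sum>j\<in>V2. w i j * c j)"
proof -
  let ?A = "wadj (cbip_edges V1 V2) w"
  have "mat_vec (V1 \<union> V2) ?A c i = (\<Sum>j\<in>V1. ?A i j * c j) + (\<Sum>j\<in>V2. ?A i j * c j)"
    unfolding mat_vec_def using assms by (simp add: sum.union_disjoint)
  also have "(\<Sum>j\<in>V1. ?A i j * c j) = 0"
    using assms by (intro sum.neutral) (auto simp: wadj_def cbip_edge_iff)
  also have "(\<Sum>j\<in>V2. ?A i j * c j) = (\<Sum>j\<in>V2. w i j * c j)"
    using assms by (intro sum.cong) (auto simp: wadj_def cbip_edge_iff)
  finally show ?thesis by simp
qed

lemma mat_vec_cbip':
  assumes "finite V1" "finite V2" "V1 \<inter> V2 = {}" "i \<in> V2"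
  shows "mat_vec (V1 \<union> V2) (wadj (cbip_edges V1 V2) w) c i = (\<Sum>j\<in>V1. w i j * c j)"
  using mat_vec_cbip[of V2 V1 i w c] assms by (simp add: cbip_edges_commute Un_commute Int_commute)

lemma sum_bilinear_swap:
  fixes c :: "'a \<Rightarrow> 'b::comm_semiring_0"
  assumes "\<And>i j. i \<in> A \<Longrightarrow> j \<in> B \<Longrightarrow> w j i = w i j"
  shows "(\<Sum>i\<in>A. c i * (\<Sum>j\<in>B. w i j * c j)) = (\<Sum>j\<in>B. c j * (\<Sum>i\<in>A. w j i * c i))"
proof -
  have "(\<Sum>i\<in>A. c i * (\<Sum>j\<in>B. w i j * c j)) = (\<Sum>i\<in>A. \<Sum>j\<in>B. c i * w i j * c j)"
    by (simp add: sum_distrib_left mult.assoc)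
  also have "\<dots> = (\<Sum>j\<in>B. \<Sum>i\<in>A. c i * w i j * c j)"
    by (rule sum.swap)
  also have "\<dots> = (\<Sum>j\<in>B. c j * (\<Sum>i\<in>A. w j i * c i))"
    unfolding sum_distrib_left
  proof (intro sum.cong refl)
    fix j i assume "j \<in> B" "i \<in> A"
    then show "c i * w i j * c j = c j * (w j i * c i)"
      using assms[of i j] by (simp add: mult_ac)
  qed
  finally show ?thesis .
qed

lemma cbip_eigenvector_imp_equal_sq_sums:
  fixes c :: "'a \<Rightarrow> real"
  assumes "finite V1" "finite V2" "V1 \<inter> V2 = {}" "\<rho> \<noteq> 0"
    and w: "pos_edge_weights (cbip_edges V1 V2) w"
    and eigen: "\<forall>i\<in>V1 \<union> V2. mat_vec (V1 \<union> V2) (wadj (cbip_edges V1 V2) w) c i = \<rho> * c i"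
  shows "(\<Sum>j\<in>V1. (c j)^2) = (\<Sum>j\<in>V2. (c j)^2)"
proof -
  have sym: "w j i = w i j" if "i \<in> V1" "j \<in> V2" for i j
    using w that unfolding pos_edge_weights_def by (metis cbip_edge_iff)
  have "\<rho> * (\<Sum>i\<in>V1. (c i)^2) = (\<Sum>i\<in>V1. c i * (\<rho> * c i))"
    by (simp add: sum_distrib_left power2_eq_square algebra_simps)
  also have "\<dots> = (\<Sum>i\<in>V1. c i * (\<Sum>j\<in>V2. w i j * c j))"
    using eigen mat_vec_cbip[OF assms(1-3), of _ w c] by (intro sum.cong) auto
  also have "\<dots> = (\<Sum>j\<in>V2. c j * (\<Sum>i\<in>V1. w j i * c i))"
    using sym by (rule sum_bilinear_swap)
  also have "\<dots> = (\<Sum>j\<in>V2. c j * (\<rho> * c j))"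
    using eigen mat_vec_cbip'[OF assms(1-3), of _ w c] by (intro sum.cong) auto
  also have "\<dots> = \<rho> * (\<Sum>j\<in>V2. (c j)^2)"
    by (simp add: sum_distrib_left power2_eq_square algebra_simps)
  finally show ?thesis using \<open>\<rho> \<noteq> 0\<close> by simp
qed

lemma pos_edge_weights_rank_one:
  assumes "\<forall>i\<in>V1 \<union> V2. c i > 0" "\<rho> > 0" "S > 0"
  shows "pos_edge_weights (cbip_edges V1 V2) (\<lambda>i j. \<rho> * c i * c j / S)"
  unfolding pos_edge_weights_def
proof (intro allI impI conjI)
  fix i j assume "{i, j} \<in> cbip_edges V1 V2"
  then have "i \<in> V1 \<union> V2" "j \<in> V1 \<union> V2" by (auto simp: cbip_edge_iff)
  then show "0 < \<rho> * c i * c j / S" using assms by simp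
qed (simp add: algebra_simps)

lemma cbip_rank_one_eigenvector:
  fixes c :: "'a \<Rightarrow> real"
  assumes "finite V1" "finite V2" "V1 \<inter> V2 = {}"
    and S1: "(\<Sum>j\<in>V1. (c j)^2) = S" and S2: "(\<Sum>j\<in>V2. (c j)^2) = S" and "S \<noteq> 0"
    and "i \<in> V1 \<union> V2"
  shows "mat_vec (V1 \<union> V2) (wadj (cbip_edges V1 V2) (\<lambda>i j. \<rho> * c i * c j / S)) c i = \<rho> * c i"
proof -
  have rank_one: "(\<Sum>j\<in>W. \<rho> * c i * c j / S * c j) = \<rho> * c i" if "(\<Sum>j\<in>W. (c j)^2) = S" for W
  proof -
    have "(\<Sum>j\<in>W. \<rho> * c i * c j / S * c j) = \<rho> * c i / S * (\<Sum>j\<in>W. (c j)^2)"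
      by (simp add: sum_distrib_left power2_eq_square algebra_simps)
    then show ?thesis using that \<open>S \<noteq> 0\<close> by simp
  qed
  from \<open>i \<in> V1 \<union> V2\<close> show ?thesis
    using mat_vec_cbip[OF assms(1-3)] mat_vec_cbip'[OF assms(1-3)] rank_one[OF S1] rank_one[OF S2]
    by auto
qed

theorem mainTheorem3:
  fixes V1 V2 :: "'a set" and c :: "'a \<Rightarrow> real" and \<rho> :: real
  assumes "finite V1" and "finite V2"
    and "V1 \<inter> V2 = {}" and "V1 \<noteq> {}" and "V2 \<noteq> {}"
    and "\<forall>i\<in>V1 \<union> V2. c i > 0"
    and "\<rho> > 0"
  shows "(\<exists>w. pos_edge_weights (cbip_edges V1 V2) w \<and>
            (\<forall>i\<in>V1 \<union> V2. mat_vec (V1 \<union> V2) (wadj (cbip_edges V1 V2) w) c i = \<rho> * c i))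
         \<longleftrightarrow> (\<Sum>j\<in>V1. (c j)^2) = (\<Sum>j\<in>V2. (c j)^2)"
proof
  assume "\<exists>w. pos_edge_weights (cbip_edges V1 V2) w \<and>
            (\<forall>i\<in>V1 \<union> V2. mat_vec (V1 \<union> V2) (wadj (cbip_edges V1 V2) w) c i = \<rho> * c i)"
  then obtain w where "pos_edge_weights (cbip_edges V1 V2) w"
    and "\<forall>i\<in>V1 \<union> V2. mat_vec (V1 \<union> V2) (wadj (cbip_edges V1 V2) w) c i = \<rho> * c i"
    by blast
  with assms(1-3,7) show "(\<Sum>j\<in>V1. (c j)^2) = (\<Sum>j\<in>V2. (c j)^2)"
    by (intro cbip_eigenvector_imp_equal_sq_sums) auto
next
  assume eq: "(\<Sum>j\<in>V1. (c j)^2) = (\<Sum>j\<in>V2. (c j)^2)"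
  define S where "S = (\<Sum>j\<in>V1. (c j)^2)"
  have "S > 0"
    unfolding S_def using assms(1,4,6) by (intro sum_pos) (auto simp: power2_eq_square)
  let ?w = "\<lambda>i j. \<rho> * c i * c j / S"
  have "pos_edge_weights (cbip_edges V1 V2) ?w"
    using assms(6,7) \<open>S > 0\<close> by (rule pos_edge_weights_rank_one)
  moreover have "\<forall>i\<in>V1 \<union> V2. mat_vec (V1 \<union> V2) (wadj (cbip_edges V1 V2) ?w) c i = \<rho> * c i"
    using cbip_rank_one_eigenvector[OF assms(1-3)] eq \<open>S > 0\<close> unfolding S_def by simp
  ultimately show "\<exists>w. pos_edge_weights (cbip_edges V1 V2) w \<and>
            (\<forall>i\<in>V1 \<union> V2. mat_vec (V1 \<union> V2) (wadj (cbip_edges V1 V2) w) c i = \<rho> * c i)"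
    by blast
qed

end
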